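(* Let $n=3$, $A\in\mathbb{R}^{3\times 3}$ and $C\in\mathbb{R}^{1\times 3}$. Assume that $(A,C)$ is an observable pair, that all eigenvalues of $A$ are nonzero, and that $C\neq \alpha CA^{t}$ for all positive integers $t$ and all $\alpha\in\mathbb{R}$. Let $t_1,t_2$ be any two distinct nonnegative integers, let $\Delta$ be a positive integer that is not a pathological sampling period of $A$, and set $t_3=t_1+\Delta$, $t_4=t_2+\Delta$. Then the matrix with rows $CA^{t_1},CA^{t_2},CA^{t_3},CA^{t_4}$ has rank $3$.
   Context: Setting: discrete-time single-output system $x(t+1)=Ax(t)+Bu(t)$, $y(t)=Cx(t)+Du(t)$ with output measured only at selected time instances; the sample-based observability matrix for instances $t_1,\ldots,t_l$ is the matrix with rows $CA^{t_1},\ldots,CA^{t_l}$. $(A,C)$ is observable if the matrix with rows $C,CA,\ldots,CA^{n-1}$ has rank $n$. A positive integer $h$ is a pathological sampling period of $A$ if there exist two distinct eigenvalues $\lambda_p\neq\lambda_q$ of $A$ in different Jordan blocks with $\lambda_p^h=\lambda_q^h$. *)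

theory Defs
  imports "HOL-Analysis.Analysis"
begin

primrec matpow :: "'a::semiring_1^'n^'n \<Rightarrow> nat \<Rightarrow> 'a^'n^'n" where
  "matpow A 0 = mat 1"
| "matpow A (Suc k) = matpow A k ** A"

definition cmat :: "real^'n^'m \<Rightarrow> complex^'n^'m" where
  "cmat A = (\<chi> i j. complex_of_real (A $ i $ j))"

definition is_eigenvalue :: "real^'n^'n \<Rightarrow> complex \<Rightarrow> bool" where
  "is_eigenvalue A lam \<longleftrightarrow> (\<exists>v::complex^'n. v \<noteq> 0 \<and> cmat A *v v = lam *s v)"

definition observable3 :: "real^3^3 \<Rightarrow> real^3 \<Rightarrow> bool" where
  "observable3 A C \<longleftrightarrow>
     rank (\<chi> i::3. C v* matpow A (if i = 0 then 0 else if i = 1 then 1 else 2)) = 3"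

text \<open>Pathological sampling period. Two distinct eigenvalues always lie in
  different Jordan blocks, so that clause of the definition is automatic.\<close>
definition pathological_period :: "real^'n^'n \<Rightarrow> nat \<Rightarrow> bool" where
  "pathological_period A h \<longleftrightarrow> h > 0 \<and>
     (\<exists>lp lq. is_eigenvalue A lp \<and> is_eigenvalue A lq \<and> lp \<noteq> lq \<and> lp ^ h = lq ^ h)"

definition sample_obs4 :: "real^3^3 \<Rightarrow> real^3 \<Rightarrow> nat \<Rightarrow> nat \<Rightarrow> nat \<Rightarrow> nat \<Rightarrow> real^3^4" where
  "sample_obs4 A C t1 t2 t3 t4 =
     (\<chi> i::4. C v* matpow A (if i = 1 then t1 else if i = 2 then t2 else if i = 3 then t3 else t4))"

end

(*
  Assume t1 < t2 and put B = A^Delta, R = A^(t2 - t1). As A is invertible (its eigenvalues are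
  nonzero), x is orthogonal to the four sampled rows iff y = A^t1 x is orthogonal to C, CB, CR
  and CRB.

  The pair (B, C) is again observable. If g has degree < 3 and C g(B) = 0, then C q(A) = 0 for
  q(s) = g(s^Delta), so q is a multiple of the cubic annihilator chi of (A, C). The roots of chi
  are eigenvalues of A: nonzero and, Delta being non-pathological, with pairwise distinct
  Delta-th powers. A root l of chi of multiplicity k is a root of q of multiplicity at least k,
  i.e. l^Delta is a root of g of multiplicity at least k; so g has at least 3 roots and vanishes.

  So C, CB, CB^2 is a basis; write CR = a C + b CB + c CB^2. If CB^2 y were nonzero, then
  orthogonality to CR would give c = 0, orthogonality to CRB = a CB + b CB^2 would give b = 0,
  and CR = a C is excluded by the hypothesis on C. Hence y is orthogonal to the basis: y = 0.
*)
theory Submission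
  imports Defs "HOL-Computational_Algebra.Fundamental_Theorem_Algebra"
begin

lemma coeff_sum_monom: "coeff (\<Sum>i<n. monom (u i) i) k = (if k < n then u k else 0)"
  by (simp add: coeff_sum coeff_monom)

lemma degree_sum_monom_less:
  assumes "n > 0"
  shows "degree (\<Sum>i<n. monom (u i) i) < n"
proof -
  have "degree (\<Sum>i<n. monom (u i) i) \<le> n - 1"
    by (rule degree_le) (auto simp: coeff_sum_monom)
  then show ?thesis
    using assms by linarith
qed

lemma order_pcompose_monom:
  fixes g :: "complex poly"
  assumes "g \<noteq> 0" and "D > 0" and "l \<noteq> 0"
  shows "order l (pcompose g (monom 1 D)) = order (l ^ D) g"
proof -
  define \<mu> where "\<mu> = l ^ D"
  obtain g1 where g1: "g = [:-\<mu>, 1:] ^ order \<mu> g * g1" and "\<not> [:-\<mu>, 1:] dvd g1"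
    using order_decomp[OF \<open>g \<noteq> 0\<close>] by blast
  then have "poly g1 \<mu> \<noteq> 0"
    using poly_eq_0_iff_dvd by blast
  have "poly (monom 1 D - [:\<mu>:]) l = 0"
    by (simp add: poly_monom \<mu>_def)
  then obtain h where h: "monom 1 D - [:\<mu>:] = [:-l, 1:] * h"
    using poly_eq_0_iff_dvd by blast
  \<comment> \<open>l is a simple root of x^D - l^D, since the derivative D x^(D-1) does not vanish at l\<close>
  have "poly h l = poly (pderiv ([:-l, 1:] * h)) l"
    by (simp only: pderiv_mult poly_add poly_mult) (simp add: pderiv_pCons)
  also have "\<dots> = of_nat D * l ^ (D - 1)"
    by (simp only: h [symmetric]) (simp add: pderiv_monom pderiv_diff poly_monom)
  finally have "poly h l \<noteq> 0"
    using assms by simp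
  have "pcompose [:-\<mu>, 1:] (monom 1 D) = [:-l, 1:] * h"
    unfolding h [symmetric] by (simp add: pcompose_pCons)
  then have power: "pcompose ([:-\<mu>, 1:] ^ n) (monom 1 D) = ([:-l, 1:] * h) ^ n" for n
    by (induction n) (simp_all only: power_0 power_Suc pcompose_1 pcompose_mult)
  define r where "r = h ^ order \<mu> g * pcompose g1 (monom 1 D)"
  have "pcompose g (monom 1 D) = [:-l, 1:] ^ order \<mu> g * r"
    unfolding r_def by (subst g1) (simp only: pcompose_mult power power_mult_distrib mult.assoc)
  moreover have "poly r l \<noteq> 0"
    using \<open>poly h l \<noteq> 0\<close> \<open>poly g1 \<mu> \<noteq> 0\<close> by (simp add: r_def poly_pcompose poly_monom \<mu>_def)
  then have "r \<noteq> 0" and "order l r = 0"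
    by (auto simp: order_0I)
  ultimately show ?thesis
    by (simp add: order_mult order_power_n_n \<mu>_def)
qed

lemma degree_le_if_dvd_pcompose_monom:
  fixes chi g :: "complex poly"
  assumes dvd: "chi dvd pcompose g (monom 1 D)" and "g \<noteq> 0" and "D > 0"
    and nonzero: "\<And>l. poly chi l = 0 \<Longrightarrow> l \<noteq> 0"
    and inj: "inj_on (\<lambda>l. l ^ D) {l. poly chi l = 0}"
  shows "degree chi \<le> degree g"
proof -
  have "pcompose g (monom 1 D) \<noteq> 0"
    using \<open>g \<noteq> 0\<close> \<open>D > 0\<close> pcompose_eq_0[of g "monom 1 D"] by (auto simp: degree_monom_eq)
  then have "chi \<noteq> 0"
    using dvd by auto
  have order_le: "order l chi \<le> order (l ^ D) g" if "poly chi l = 0" for l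
  proof -
    have "order l chi \<le> order l (pcompose g (monom 1 D))"
      using dvd \<open>pcompose g (monom 1 D) \<noteq> 0\<close> order_1 dvd_trans order_divides by metis
    also have "\<dots> = order (l ^ D) g"
      using order_pcompose_monom \<open>g \<noteq> 0\<close> \<open>D > 0\<close> nonzero that by blast
    finally show ?thesis .
  qed
  have "image_mset (\<lambda>l. l ^ D) (proots chi) \<subseteq># proots g"
  proof (rule mset_subset_eqI)
    fix m
    show "count (image_mset (\<lambda>l. l ^ D) (proots chi)) m \<le> count (proots g) m"
    proof (cases "\<exists>l. poly chi l = 0 \<and> l ^ D = m")
      case True
      then obtain l where l: "poly chi l = 0" "l ^ D = m"
        by blast
      then have "(\<lambda>l. l ^ D) -` {m} \<inter> set_mset (proots chi) = {l}"
        using inj \<open>chi \<noteq> 0\<close> by (auto simp: inj_on_def)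
      then have "count (image_mset (\<lambda>l. l ^ D) (proots chi)) m = order l chi"
        by (simp add: count_image_mset \<open>chi \<noteq> 0\<close>)
      then show ?thesis
        using order_le[OF l(1)] l(2) \<open>g \<noteq> 0\<close> by simp
    next
      case False
      then have "(\<lambda>l. l ^ D) -` {m} \<inter> set_mset (proots chi) = {}"
        using \<open>chi \<noteq> 0\<close> by auto
      then show ?thesis
        by (simp add: count_image_mset)
    qed
  qed
  then have "size (proots chi) \<le> size (proots g)"
    using size_mset_mono by fastforce
  then show ?thesis
    by (simp add: size_proots_complex)
qed

lemma matpow_add: "matpow M (m + n) = matpow M m ** matpow M n"
  by (induction n) (simp_all add: matrix_mul_assoc)

lemma matpow_commute: "M ** matpow M n = matpow M n ** M"
  using matpow_add[of M 1 n] matpow_add[of M n 1] by simp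

lemma invertible_matpow:
  assumes "invertible A"
  shows "invertible (matpow A k)"
proof (induction k)
  case 0
  show ?case
    unfolding invertible_def by (intro exI[of _ "mat 1"]) simp
next
  case (Suc k)
  then show ?case
    using assms by (simp add: invertible_mult)
qed

lemma sum_vector_matrix_mult: "(\<Sum>i\<in>I. f i) v* M = (\<Sum>i\<in>I. f i v* M)"
  by (induction I rule: infinite_finite_induct) (simp_all add: vector_matrix_left_distrib)

lemma matrix_vector_mult_mat: "mat k *v x = k *s (x :: 'a::comm_semiring_1^'n)"
  by (simp add: vec_eq_iff matrix_vector_mult_def mat_def if_distrib if_distribR cong: if_cong)

lemma vector_matrix_mult_mat: "x v* mat k = k *s (x :: 'a::comm_semiring_1^'n)"
  using transpose_matrix_vector[of "mat k" x] by (simp add: matrix_vector_mult_mat)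

lemma eigenvector_if_left_eigenvector:
  fixes M :: "'a::field^'n^'n"
  assumes "w \<noteq> 0" and "w v* M = l *s w"
  shows "\<exists>v. v \<noteq> 0 \<and> M *v v = l *s v"
proof -
  have "w v* (M - mat l) = 0"
    using assms(2) by (simp add: vector_matrix_mult_diff_rdistrib vector_matrix_mult_mat)
  then have "\<nexists>B. (M - mat l) ** B = mat 1"
    using \<open>w \<noteq> 0\<close> by (metis vector_matrix_mul_assoc vector_matrix_mul_rid vector_matrix_mult_0)
  then obtain v where "v \<noteq> 0" and "(M - mat l) *v v = 0"
    by (metis invertible_left_inverse invertible_right_inverse matrix_left_invertible_ker)
  then show ?thesis
    by (auto simp: matrix_vector_mult_diff_rdistrib matrix_vector_mult_mat)
qed

section \<open>Row vectors \<open>c p(M)\<close>\<close>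

definition row_poly :: "'a::field^'n \<Rightarrow> 'a^'n^'n \<Rightarrow> 'a poly \<Rightarrow> 'a^'n" where
  "row_poly c M p = (\<Sum>i\<le>degree p. coeff p i *s (c v* matpow M i))"

lemma row_poly_eq_sum:
  assumes "degree p < n"
  shows "row_poly c M p = (\<Sum>i<n. coeff p i *s (c v* matpow M i))"
  unfolding row_poly_def
  by (rule sum.mono_neutral_left) (use assms in \<open>auto simp: coeff_eq_0\<close>)

lemma row_poly_0 [simp]: "row_poly c M 0 = 0"
  by (simp add: row_poly_def)

lemma row_poly_const [simp]: "row_poly c M [:a:] = a *s c"
  by (simp add: row_poly_def)

lemma row_poly_add: "row_poly c M (p + q) = row_poly c M p + row_poly c M q"
proof -
  define n where "n = Suc (max (degree p) (degree q))"
  have "degree (p + q) < n"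
    using degree_add_le_max[of p q] by (simp add: n_def)
  then show ?thesis
    by (simp add: row_poly_eq_sum[where n = n] n_def sum.distrib vector_sadd_rdistrib)
qed

lemma row_poly_diff: "row_poly c M (p - q) = row_poly c M p - row_poly c M q"
  using row_poly_add[of c M "p - q" q] by (simp add: eq_diff_eq)

lemma row_poly_smult: "row_poly c M (smult a p) = a *s row_poly c M p"
  by (simp add: row_poly_eq_sum[where n = "Suc (degree p)"] le_imp_less_Suc degree_smult_le
      vec.scale_sum_right)

lemma row_poly_pCons_0: "row_poly c M (pCons 0 p) = row_poly c M p v* M"
proof -
  have "row_poly c M (pCons 0 p) =
      (\<Sum>i<Suc (Suc (degree p)). coeff (pCons 0 p) i *s (c v* matpow M i))"
    by (rule row_poly_eq_sum) (simp add: degree_pCons_le le_imp_less_Suc)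
  also have "\<dots> = (\<Sum>i<Suc (degree p). (coeff p i *s (c v* matpow M i)) v* M)"
    by (simp only: sum.lessThan_Suc_shift)
      (simp add: scalar_vector_matrix_assoc vector_matrix_mul_assoc)
  also have "\<dots> = row_poly c M p v* M"
    unfolding row_poly_eq_sum[where n = "Suc (degree p)", OF lessI] sum_vector_matrix_mult ..
  finally show ?thesis .
qed

lemma row_poly_pCons: "row_poly c M (pCons a p) = a *s c + row_poly c M p v* M"
  using row_poly_add[of c M "[:a:]" "pCons 0 p"] by (simp add: row_poly_pCons_0)

lemma row_poly_monom: "row_poly c M (monom a k) = a *s (c v* matpow M k)"
  by (simp add: row_poly_eq_sum[where n = "Suc k"] degree_monom_le le_imp_less_Suc coeff_monom
      if_distrib[of "\<lambda>x. x *s _"] sum.delta' cong: if_cong)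

lemma row_poly_sum: "row_poly c M (\<Sum>i\<in>I. f i) = (\<Sum>i\<in>I. row_poly c M (f i))"
  by (induction I rule: infinite_finite_induct) (simp_all add: row_poly_add)

lemma row_poly_zero_left [simp]: "row_poly 0 M p = 0"
  by (simp add: row_poly_def)

lemma row_poly_add_left: "row_poly (x + y) M p = row_poly x M p + row_poly y M p"
  by (simp add: row_poly_def vector_matrix_left_distrib vector_add_ldistrib sum.distrib)

lemma row_poly_scale_left: "row_poly (a *s x) M p = a *s row_poly x M p"
  by (simp add: row_poly_def scalar_vector_matrix_assoc vec.scale_sum_right mult.commute)

lemma row_poly_vector_matrix_mult_left: "row_poly (x v* M) M p = row_poly x M p v* M"
  by (simp add: row_poly_def sum_vector_matrix_mult vector_matrix_mul_assoc matpow_commute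
      scalar_vector_matrix_assoc)

lemma row_poly_mult: "row_poly c M (p * q) = row_poly (row_poly c M p) M q"
proof (induction p)
  case (pCons a p)
  then show ?case
    by (simp add: row_poly_add row_poly_smult row_poly_pCons_0 row_poly_pCons
        row_poly_add_left row_poly_scale_left row_poly_vector_matrix_mult_left)
qed simp

lemma row_poly_pcompose_monom:
  "row_poly c M (pcompose p (monom 1 D)) = row_poly c (matpow M D) p"
proof (induction p)
  case (pCons a p)
  have "row_poly c M (pcompose (pCons a p) (monom 1 D)) =
      a *s c + row_poly c M (pcompose p (monom 1 D) * monom 1 D)"
    by (simp add: pcompose_pCons row_poly_add mult.commute)
  also have "\<dots> = row_poly c (matpow M D) (pCons a p)"
    by (simp add: row_poly_mult row_poly_monom pCons.IH row_poly_pCons)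
  finally show ?case .
qed simp

section \<open>Krylov independence\<close>

definition krylov_independent :: "'a::field^'n^'n \<Rightarrow> 'a^'n \<Rightarrow> bool" where
  "krylov_independent M c \<longleftrightarrow>
     (\<forall>u. (\<Sum>i<CARD('n). u i *s (c v* matpow M i)) = 0 \<longrightarrow> (\<forall>i<CARD('n). u i = 0))"

lemma krylov_independent_iff_poly:
  fixes M :: "'a::field^'n^'n"
  shows "krylov_independent M c \<longleftrightarrow>
    (\<forall>p. degree p < CARD('n) \<longrightarrow> row_poly c M p = 0 \<longrightarrow> p = 0)"
proof
  assume indep: "krylov_independent M c"
  show "\<forall>p. degree p < CARD('n) \<longrightarrow> row_poly c M p = 0 \<longrightarrow> p = 0"
  proof (intro allI impI)
    fix p :: "'a poly"
    assume "degree p < CARD('n)" and "row_poly c M p = 0"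
    then have "\<forall>i<CARD('n). coeff p i = 0"
      using indep by (simp add: krylov_independent_def row_poly_eq_sum)
    then show "p = 0"
      using \<open>degree p < CARD('n)\<close> leading_coeff_0_iff by blast
  qed
next
  assume poly: "\<forall>p. degree p < CARD('n) \<longrightarrow> row_poly c M p = 0 \<longrightarrow> p = 0"
  show "krylov_independent M c"
    unfolding krylov_independent_def
  proof (intro allI impI)
    fix u i
    assume "(\<Sum>i<CARD('n). u i *s (c v* matpow M i)) = 0" and "i < CARD('n)"
    then have "(\<Sum>i<CARD('n). monom (u i) i) = 0"
      using poly degree_sum_monom_less[where n = "CARD('n)" and u = u]
      by (simp add: row_poly_sum row_poly_monom)
    then show "u i = 0"
      using coeff_sum_monom[where n = "CARD('n)" and u = u and k = i] \<open>i < CARD('n)\<close> by simp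
  qed
qed

lemma krylov_independent_spans:
  fixes M :: "'a::field^'n^'n"
  assumes indep: "krylov_independent M c"
  shows "\<exists>u. y = (\<Sum>i<CARD('n). u i *s (c v* matpow M i))"
proof -
  define f where "f i = c v* matpow M i" for i
  define K where "K = f ` {..<CARD('n)}"
  have inj: "inj_on f {..<CARD('n)}"
  proof (rule inj_onI)
    fix i j
    assume "i \<in> {..<CARD('n)}" and "j \<in> {..<CARD('n)}" and "f i = f j"
    then have "row_poly c M (monom 1 i - monom 1 j) = 0"
      by (simp add: row_poly_diff row_poly_monom f_def)
    moreover have "degree (monom 1 i - monom 1 j :: 'a poly) < CARD('n)"
      using \<open>i \<in> {..<CARD('n)}\<close> \<open>j \<in> {..<CARD('n)}\<close>
      by (intro degree_diff_less) (simp_all add: degree_monom_eq)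
    ultimately have "monom 1 i - monom 1 j = (0 :: 'a poly)"
      using indep unfolding krylov_independent_iff_poly by blast
    then show "i = j"
      by (simp add: monom_eq_iff')
  qed
  have sum_K: "(\<Sum>v\<in>K. u v *s v) = (\<Sum>i<CARD('n). u (f i) *s f i)" for u
    unfolding K_def using sum.reindex[OF inj] by simp
  have "vec.independent K"
  proof
    assume "vec.dependent K"
    then obtain u i where "i < CARD('n)" and "u (f i) \<noteq> 0" and "(\<Sum>v\<in>K. u v *s v) = 0"
      using vec.dependent_finite[of K] by (auto simp: K_def)
    then show False
      using indep by (auto simp: krylov_independent_def sum_K f_def)
  qed
  moreover have "card K = vec.dim (UNIV :: ('a^'n) set)"
    using inj by (simp add: K_def card_image card_cart_basis)
  ultimately have "y \<in> vec.span K"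
    using vec.card_eq_dim[of K UNIV] by (auto simp: K_def)
  moreover have "finite K"
    by (simp add: K_def)
  ultimately obtain u where "y = (\<Sum>v\<in>K. u v *s v)"
    using vec.span_finite by blast
  then show ?thesis
    unfolding sum_K f_def by (intro exI[where x = "\<lambda>i. u (c v* matpow M i)"])
qed

lemma krylov_annihilator_exists:
  fixes M :: "'a::field^'n^'n"
  assumes "krylov_independent M c"
  obtains chi where "degree chi = CARD('n)" and "row_poly c M chi = 0"
proof -
  obtain u where u: "c v* matpow M CARD('n) = (\<Sum>i<CARD('n). u i *s (c v* matpow M i))"
    using krylov_independent_spans[OF assms] by blast
  define chi where "chi = monom 1 CARD('n) + - (\<Sum>i<CARD('n). monom (u i) i)"
  have "degree (- (\<Sum>i<CARD('n). monom (u i) i)) < degree (monom (1::'a) CARD('n))"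
    using degree_sum_monom_less[where n = "CARD('n)" and u = u] by (simp add: degree_monom_eq)
  then have "degree chi = CARD('n)"
    unfolding chi_def by (subst degree_add_eq_left) (simp_all add: degree_monom_eq)
  moreover have "row_poly c M chi = 0"
    unfolding chi_def diff_conv_add_uminus[symmetric]
    by (simp only: row_poly_diff row_poly_sum row_poly_monom vector_smult_lid u diff_self)
  ultimately show thesis
    using that by blast
qed

lemma krylov_annihilator_dvd:
  fixes M :: "'a::field^'n^'n"
  assumes indep: "krylov_independent M c"
    and chi: "degree chi = CARD('n)" "row_poly c M chi = 0"
    and "row_poly c M q = 0"
  shows "chi dvd q"
proof -
  have "chi \<noteq> 0"
    using chi by auto
  have "row_poly c M (q - chi * (q div chi)) = 0"
    using \<open>row_poly c M q = 0\<close> chi by (simp add: row_poly_diff row_poly_mult)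
  then have "row_poly c M (q mod chi) = 0"
    by (simp add: minus_mult_div_eq_mod)
  then have "q mod chi = 0"
    using indep degree_mod_less[OF \<open>chi \<noteq> 0\<close>, of q] chi
    unfolding krylov_independent_iff_poly by auto
  then show ?thesis
    by (simp add: mod_eq_0_iff_dvd)
qed

lemma eigenvalue_if_root_of_krylov_annihilator:
  fixes M :: "'a::field^'n^'n"
  assumes indep: "krylov_independent M c"
    and chi: "degree chi = CARD('n)" "row_poly c M chi = 0"
    and "poly chi l = 0"
  shows "\<exists>v. v \<noteq> 0 \<and> M *v v = l *s v"
proof -
  obtain h where h: "chi = h * [:-l, 1:]"
    using \<open>poly chi l = 0\<close> unfolding poly_eq_0_iff_dvd dvd_def by (auto simp: ac_simps)
  have "chi \<noteq> 0"
    using chi by auto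
  then have "h \<noteq> 0"
    using h by auto
  then have "degree chi = degree h + 1"
    using h degree_mult_eq[OF \<open>h \<noteq> 0\<close>, of "[:-l, 1:]"] by simp
  then have "degree h < CARD('n)"
    using chi by simp
  then have "row_poly c M h \<noteq> 0"
    using indep \<open>h \<noteq> 0\<close> unfolding krylov_independent_iff_poly by blast
  moreover have "row_poly (row_poly c M h) M [:-l, 1:] = 0"
    using chi(2) unfolding h row_poly_mult .
  then have "row_poly c M h v* M = l *s row_poly c M h"
    by (simp add: row_poly_pCons algebra_simps)
  ultimately show ?thesis
    by (rule eigenvector_if_left_eigenvector)
qed

lemma krylov_independent_matpow_complex:
  fixes M :: "complex^'n^'n"
  assumes indep: "krylov_independent M c" and "D > 0"
    and nonzero: "\<And>l v. v \<noteq> 0 \<Longrightarrow> M *v v = l *s v \<Longrightarrow> l \<noteq> 0"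
    and inj: "inj_on (\<lambda>l. l ^ D) {l. \<exists>v. v \<noteq> 0 \<and> M *v v = l *s v}"
  shows "krylov_independent (matpow M D) c"
proof -
  obtain chi where chi: "degree chi = CARD('n)" "row_poly c M chi = 0"
    using krylov_annihilator_exists[OF indep] by blast
  have roots: "{l. poly chi l = 0} \<subseteq> {l. \<exists>v. v \<noteq> 0 \<and> M *v v = l *s v}"
    using eigenvalue_if_root_of_krylov_annihilator[OF indep chi] by blast
  show ?thesis
    unfolding krylov_independent_iff_poly
  proof (intro allI impI)
    fix g
    assume "degree g < CARD('n)" and "row_poly c (matpow M D) g = 0"
    then have "chi dvd pcompose g (monom 1 D)"
      using krylov_annihilator_dvd[OF indep chi] by (simp add: row_poly_pcompose_monom)
    show "g = 0"
    proof (rule ccontr)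
      assume "g \<noteq> 0"
      have "degree chi \<le> degree g"
      proof (rule degree_le_if_dvd_pcompose_monom)
        show "inj_on (\<lambda>l. l ^ D) {l. poly chi l = 0}"
          using inj_on_subset[OF inj roots] .
      qed (use \<open>chi dvd _\<close> \<open>g \<noteq> 0\<close> \<open>D > 0\<close> roots nonzero in auto)
      then show False
        using \<open>degree g < CARD('n)\<close> chi by simp
    qed
  qed
qed

section \<open>Complexification\<close>

definition cvec :: "real^'n \<Rightarrow> complex^'n" where
  "cvec v = (\<chi> i. complex_of_real (v $ i))"

lemma cvec_nth [simp]: "cvec v $ i = complex_of_real (v $ i)"
  by (simp add: cvec_def)

lemma cmat_nth [simp]: "cmat A $ i $ j = complex_of_real (A $ i $ j)"
  by (simp add: cmat_def)

lemma cvec_eq_0_iff [simp]: "cvec x = 0 \<longleftrightarrow> x = 0"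
  by (simp add: vec_eq_iff)

lemma cvec_vector_matrix_mult: "cvec (x v* A) = cvec x v* cmat A"
  by (simp add: vec_eq_iff vector_matrix_mult_def)

lemma cvec_matrix_vector_mult: "cvec (A *v x) = cmat A *v cvec x"
  by (simp add: vec_eq_iff matrix_vector_mult_def)

lemma cmat_matpow: "cmat (matpow A k) = matpow (cmat A) k"
  by (induction k) (simp_all add: vec_eq_iff matrix_matrix_mult_def mat_def)

lemma krylov_independent_cmat_iff:
  fixes M :: "real^'n^'n"
  shows "krylov_independent (cmat M) (cvec c) \<longleftrightarrow> krylov_independent M c"
proof -
  define v where "v i = c v* matpow M i" for i
  have cvec_v: "cvec c v* matpow (cmat M) i = cvec (v i)" for i
    by (simp add: v_def cvec_vector_matrix_mult cmat_matpow)
  have nth_sum: "(\<Sum>i<CARD('n). u i *s cvec (v i)) $ j =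
      (\<Sum>i<CARD('n). u i * complex_of_real (v i $ j))" for u j
    by (simp add: sum_component)
  show ?thesis
  proof
    assume indep: "krylov_independent (cmat M) (cvec c)"
    show "krylov_independent M c"
      unfolding krylov_independent_def
    proof (intro allI impI)
      fix u i
      assume "(\<Sum>i<CARD('n). u i *s (c v* matpow M i)) = 0" and "i < CARD('n)"
      moreover have "(\<Sum>i<CARD('n). complex_of_real (u i) *s cvec (v i)) =
          cvec (\<Sum>i<CARD('n). u i *s v i)"
        by (simp add: vec_eq_iff sum_component)
      ultimately have "(\<Sum>i<CARD('n). complex_of_real (u i) *s cvec (v i)) = 0"
        by (simp add: v_def)
      then have "complex_of_real (u i) = 0"
        using indep[unfolded krylov_independent_def cvec_v, rule_format,
            of "\<lambda>i. complex_of_real (u i)"] \<open>i < CARD('n)\<close>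
        by simp
      then show "u i = 0"
        by simp
    qed
  next
    assume indep: "krylov_independent M c"
    show "krylov_independent (cmat M) (cvec c)"
      unfolding krylov_independent_def cvec_v
    proof (intro allI impI)
      fix u i
      assume sum0: "(\<Sum>i<CARD('n). u i *s cvec (v i)) = 0" and "i < CARD('n)"
      have "(\<Sum>i<CARD('n). Re (u i) *s v i) $ j = Re ((\<Sum>i<CARD('n). u i *s cvec (v i)) $ j)"
        and "(\<Sum>i<CARD('n). Im (u i) *s v i) $ j = Im ((\<Sum>i<CARD('n). u i *s cvec (v i)) $ j)" for j
        by (simp_all add: nth_sum sum_component)
      then have "(\<Sum>i<CARD('n). Re (u i) *s v i) = 0" and "(\<Sum>i<CARD('n). Im (u i) *s v i) = 0"
        by (simp_all add: sum0 vec_eq_iff)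
      then show "u i = 0"
        using indep[unfolded krylov_independent_def, rule_format, of "\<lambda>i. Re (u i)" i]
          indep[unfolded krylov_independent_def, rule_format, of "\<lambda>i. Im (u i)" i]
          \<open>i < CARD('n)\<close> by (simp add: v_def complex_eq_iff)
    qed
  qed
qed

lemma krylov_independent_matpow:
  fixes A :: "real^'n^'n"
  assumes "krylov_independent A C" and "\<forall>l. is_eigenvalue A l \<longrightarrow> l \<noteq> 0"
    and "D > 0" and "\<not> pathological_period A D"
  shows "krylov_independent (matpow A D) C"
proof -
  have "krylov_independent (matpow (cmat A) D) (cvec C)"
  proof (rule krylov_independent_matpow_complex)
    show "krylov_independent (cmat A) (cvec C)"
      using assms(1) by (simp add: krylov_independent_cmat_iff)
    show "inj_on (\<lambda>l. l ^ D) {l. \<exists>v. v \<noteq> 0 \<and> cmat A *v v = l *s v}"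
      using assms(3,4) unfolding pathological_period_def is_eigenvalue_def inj_on_def by blast
  qed (use assms in \<open>auto simp: is_eigenvalue_def\<close>)
  then show ?thesis
    by (simp add: krylov_independent_cmat_iff flip: cmat_matpow)
qed

lemma invertible_if_eigenvalues_nonzero:
  fixes A :: "real^'n^'n"
  assumes "\<forall>l. is_eigenvalue A l \<longrightarrow> l \<noteq> 0"
  shows "invertible A"
proof (rule ccontr)
  assume "\<not> invertible A"
  then obtain x where "x \<noteq> 0" and "A *v x = 0"
    by (metis invertible_left_inverse matrix_left_invertible_ker)
  then have "is_eigenvalue A 0"
    unfolding is_eigenvalue_def by (metis cvec_eq_0_iff cvec_matrix_vector_mult vector_smult_lzero)
  then show False
    using assms by blast
qed

section \<open>Three dimensions\<close>

lemma krylov_independent_if_observable3: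
  assumes "observable3 A C"
  shows "krylov_independent A C"
proof -
  define K where "K = (\<chi> i::3. C v* matpow A (if i = 0 then 0 else if i = 1 then 1 else 2))"
  have "rank (transpose K) = CARD(3)"
    using assms by (simp add: observable3_def K_def rank_transpose)
  then have ker: "x = 0" if "transpose K *v x = 0" for x
    using matrix_nonfull_linear_equations_eq that by blast
  show ?thesis
    unfolding krylov_independent_def
  proof (intro allI impI)
    fix u i
    assume sum0: "(\<Sum>i<CARD(3). u i *s (C v* matpow A i)) = 0" and "i < CARD(3)"
    have "transpose K *v vector [u 1, u 2, u 0] = (\<Sum>i<CARD(3). u i *s (C v* matpow A i))"
      by (simp add: matrix_vector_column sum_3 K_def numeral_3_eq_3 numeral_2_eq_2 algebra_simps)
    then have "vector [u 1, u 2, u 0] = (0::real^3)"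
      using ker sum0 by simp
    then have "u 0 = 0" "u 1 = 0" "u 2 = 0"
      by (simp_all add: vec_eq_iff forall_3)
    then show "u i = 0"
      using \<open>i < CARD(3)\<close> by (auto simp: less_Suc_eq numeral_3_eq_3 numeral_2_eq_2)
  qed
qed

lemma krylov_independent_spans3:
  fixes M :: "'a::field^3^3"
  assumes "krylov_independent M c"
  shows "\<exists>a b g. y = a *s c + b *s (c v* M) + g *s (c v* matpow M 2)"
proof -
  obtain u where "y = (\<Sum>i<CARD(3). u i *s (c v* matpow M i))"
    using krylov_independent_spans[OF assms] by blast
  then have "y = u 0 *s c + u 1 *s (c v* M) + u 2 *s (c v* matpow M 2)"
    by (simp add: numeral_3_eq_3 numeral_2_eq_2 add.assoc)
  then show ?thesis
    by blast
qed

lemma orthogonal_krylov_rows_eq_0: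
  fixes B R :: "real^3^3" and C y :: "real^3"
  assumes indep: "krylov_independent B C" and not_parallel: "\<forall>\<alpha>. C v* R \<noteq> \<alpha> *s C"
    and C: "inner C y = 0" and CB: "inner (C v* B) y = 0"
    and CR: "inner (C v* R) y = 0" and CRB: "inner ((C v* R) v* B) y = 0"
  shows "y = 0"
proof -
  define s where "s = inner (C v* matpow B 2) y"
  have "s = 0"
  proof (rule ccontr)
    assume "s \<noteq> 0"
    obtain a b g where R: "C v* R = a *s C + b *s (C v* B) + g *s (C v* matpow B 2)"
      using krylov_independent_spans3[OF indep] by blast
    then have "g * s = 0"
      using C CB CR by (simp add: inner_add_left scalar_mult_eq_scaleR s_def)
    then have "g = 0"
      using \<open>s \<noteq> 0\<close> by simp
    then have "(C v* R) v* B = a *s (C v* B) + b *s (C v* matpow B 2)"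
      using R by (simp add: vector_matrix_left_distrib scalar_vector_matrix_assoc
          vector_matrix_mul_assoc numeral_2_eq_2)
    then have "b * s = 0"
      using CB CRB by (simp add: inner_add_left scalar_mult_eq_scaleR s_def)
    then have "b = 0"
      using \<open>s \<noteq> 0\<close> by simp
    then show False
      using R \<open>g = 0\<close> not_parallel by simp
  qed
  obtain a b g where y: "y = a *s C + b *s (C v* B) + g *s (C v* matpow B 2)"
    using krylov_independent_spans3[OF indep] by blast
  have "inner (a *s C + b *s (C v* B) + g *s (C v* matpow B 2)) y = 0"
    using C CB \<open>s = 0\<close> by (simp add: inner_add_left scalar_mult_eq_scaleR s_def)
  then show "y = 0"
    by (simp flip: y)
qed

lemma sample_obs4_mult_eq_0_iff:
  "sample_obs4 A C t1 t2 t3 t4 *v x = 0 \<longleftrightarrow>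
     inner (C v* matpow A t1) x = 0 \<and> inner (C v* matpow A t2) x = 0 \<and>
     inner (C v* matpow A t3) x = 0 \<and> inner (C v* matpow A t4) x = 0"
  by (auto simp: vec_eq_iff forall_4 matrix_vector_mul_component sample_obs4_def)

lemma orthogonal_sample_rows_eq_0:
  fixes A :: "real^3^3"
  assumes "invertible A" and indep: "krylov_independent (matpow A D) C" and "t1 < t2"
    and not_parallel: "\<forall>\<alpha>. C \<noteq> \<alpha> *s (C v* matpow A (t2 - t1))"
    and "inner (C v* matpow A t1) x = 0" "inner (C v* matpow A t2) x = 0"
      "inner (C v* matpow A (t1 + D)) x = 0" "inner (C v* matpow A (t2 + D)) x = 0"
  shows "x = 0"
proof -
  define R where "R = matpow A (t2 - t1)"
  define y where "y = matpow A t1 *v x"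
  have shift: "inner (C v* matpow A (k + t1)) x = inner (C v* matpow A k) y" for k
    by (simp add: y_def matpow_add dot_lmul_matrix flip: vector_matrix_mul_assoc)
  have "\<forall>\<alpha>. C v* R \<noteq> \<alpha> *s C"
  proof (intro allI notI)
    fix \<alpha>
    assume CR: "C v* R = \<alpha> *s C"
    show False
    proof (cases "\<alpha> = 0")
      case True
      obtain R' where "R ** R' = mat 1"
        using invertible_matpow[OF \<open>invertible A\<close>] by (auto simp: R_def invertible_def)
      then have "C = (C v* R) v* R'"
        by (simp add: vector_matrix_mul_assoc)
      then have "C = 0"
        using CR True by simp
      then show False
        using not_parallel by auto
    next
      case False
      then have "C = (1 / \<alpha>) *s (C v* R)"
        using CR by simp
      then show False
        using not_parallel by (simp add: R_def)
    qed
  qed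
  moreover have "inner C y = 0"
    using shift[of 0] assms by simp
  moreover have "inner (C v* matpow A D) y = 0"
    using shift[of D] assms by (simp add: add.commute)
  moreover have "inner (C v* R) y = 0"
    using shift[of "t2 - t1"] assms by (simp add: R_def)
  moreover have "inner ((C v* R) v* matpow A D) y = 0"
  proof -
    have "t2 - t1 + D + t1 = t2 + D"
      using \<open>t1 < t2\<close> by simp
    then have "inner (C v* matpow A (t2 - t1 + D)) y = 0"
      using shift[of "t2 - t1 + D"] assms(8) by simp
    then show ?thesis
      by (simp add: R_def vector_matrix_mul_assoc matpow_add)
  qed
  ultimately have "matpow A t1 *v x = 0"
    using orthogonal_krylov_rows_eq_0[OF indep] by (simp add: y_def)
  then show "x = 0"
    using inj_matrix_vector_mult[OF invertible_matpow[OF \<open>invertible A\<close>]]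
    by (metis injD matrix_vector_mult_0_right)
qed

theorem theorem3:
  fixes A :: "real^3^3" and C :: "real^3" and t1 t2 \<Delta> :: nat
  assumes "observable3 A C"
    and "\<forall>lam. is_eigenvalue A lam \<longrightarrow> lam \<noteq> 0"
    and "\<forall>t::nat. \<forall>\<alpha>::real. t > 0 \<longrightarrow> C \<noteq> \<alpha> *s (C v* matpow A t)"
    and "t1 \<noteq> t2"
    and "\<Delta> > 0"
    and "\<not> pathological_period A \<Delta>"
  shows "rank (sample_obs4 A C t1 t2 (t1 + \<Delta>) (t2 + \<Delta>)) = 3"
proof -
  have indep: "krylov_independent (matpow A \<Delta>) C"
    using assms krylov_independent_if_observable3 krylov_independent_matpow by blast
  have "invertible A"
    using assms(2) by (rule invertible_if_eigenvalues_nonzero)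
  have "x = 0" if "sample_obs4 A C t1 t2 (t1 + \<Delta>) (t2 + \<Delta>) *v x = 0" for x
  proof (cases "t1 < t2")
    case True
    then show ?thesis
      using orthogonal_sample_rows_eq_0[OF \<open>invertible A\<close> indep True] that assms(3)
      by (simp add: sample_obs4_mult_eq_0_iff)
  next
    case False
    then have "t2 < t1"
      using assms(4) by simp
    then show ?thesis
      using orthogonal_sample_rows_eq_0[OF \<open>invertible A\<close> indep \<open>t2 < t1\<close>] that assms(3)
      by (simp add: sample_obs4_mult_eq_0_iff)
  qed
  then show ?thesis
    using matrix_nonfull_linear_equations_eq[of "sample_obs4 A C t1 t2 (t1 + \<Delta>) (t2 + \<Delta>)"]
    by auto
qed

end
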